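(* Let $1\le n_1\le n$ and let $([n_1],v,e),([n_1],u,g)$ be graphs. Extend both to size $n$ by $v_i=u_i=x_*$ and $e_{ii}=g_{ii}=y_0$ for $n_1+1\le i\le n$, and $e_{ii'}=g_{ii'}=y_*$ whenever $\max\{i,i'\}\ge n_1+1$ and $i\ne i'$. Then $D_n(([n],v,e),([n],u,g))\le D_{n_1}(([n_1],v,e),([n_1],u,g))$.
   Context: $(\mathcal X,d_{\mathcal X})$, $(\mathcal Y,d_{\mathcal Y})$ are pseudometric spaces with $\mathrm{diam}(\mathcal X)\le C_{\mathcal X}$, $\mathrm{diam}(\mathcal Y)\le C_{\mathcal Y}$, $y_0\in\mathcal Y$ a distinguished "no edge" element, $p\ge1$, $C_1^p\ge C_{\mathcal X}^p+\frac12C_{\mathcal Y}^p$. New points $x_*\notin\mathcal X$, $y_*\notin\mathcal Y$ are adjoined with $d_{\mathcal X}(x,x_* )^p=d_{\mathcal X}(x_*,x)^p=C_1^p-\frac12C_{\mathcal Y}^p$ for $x\in\mathcal X$, $d_{\mathcal X}(x_*,x_* )=0$, and $d_{\mathcal Y}(y,y_* )=d_{\mathcal Y}(y_*,y)=C_{\mathcal Y}$ for $y\in\mathcal Y$, $d_{\mathcal Y}(y_*,y_* )=0$. A graph $([n],v,e)$ has $v:[n]\to\mathcal X\cup\{x_*\}$ and symmetric $e:[n]^2\to\mathcal Y\cup\{y_*\}$ with $e_{ii}=y_0$; $S_n$ is the set of permutations of $[n]=\{1,\dots,n\}$. For two graphs of equal size $N\ge1$, $$D_N\big(([N],a,g),([N],b,h)\big)=N^{-1/p}\min_{\pi\in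 S_N}\Big[\sum_{i\in[N]}d_{\mathcal X}(a_i,b_{\pi(i)})^p+\frac{1}{2(N-1)}\sum_{(i,i')\in[N]^2}d_{\mathcal Y}(g_{ii'},h_{\pi(i)\pi(i')})^p\Big]^{1/p},$$ with $0/0:=0$ (this equals both GOSPA distances between graphs of equal size). *)

theory Defs
  imports "HOL-Analysis.Analysis" "HOL-Combinatorics.Permutations"
begin

definition pseudometric :: "('a \<Rightarrow> 'a \<Rightarrow> real) \<Rightarrow> bool" where
  "pseudometric d \<longleftrightarrow> (\<forall>x. d x x = 0) \<and> (\<forall>x y. d x y = d y x)
     \<and> (\<forall>x y z. d x z \<le> d x y + d y z)"

text \<open>Extended node space X \<union> {x_*}: None plays the role of x_*.
  d(x,x_*)^p = C1^p - CY^p/2.\<close>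
fun dX_ext :: "('x \<Rightarrow> 'x \<Rightarrow> real) \<Rightarrow> real \<Rightarrow> real \<Rightarrow> real \<Rightarrow> 'x option \<Rightarrow> 'x option \<Rightarrow> real" where
  "dX_ext dX p C1 CY (Some a) (Some b) = dX a b"
| "dX_ext dX p C1 CY None None = 0"
| "dX_ext dX p C1 CY _ _ = (C1 powr p - CY powr p / 2) powr (1 / p)"

text \<open>Extended edge space Y \<union> {y_*}: None plays the role of y_*.\<close>
fun dY_ext :: "('y \<Rightarrow> 'y \<Rightarrow> real) \<Rightarrow> real \<Rightarrow> 'y option \<Rightarrow> 'y option \<Rightarrow> real" where
  "dY_ext dY CY (Some a) (Some b) = dY a b"
| "dY_ext dY CY None None = 0"
| "dY_ext dY CY _ _ = CY"

text \<open>The bracketed cost for a permutation \<pi> of [N] = {1..N}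
  (with 1/(2(N-1)) = 0 when N = 1, matching 0/0 := 0).\<close>
definition graph_cost ::
  "('v \<Rightarrow> 'v \<Rightarrow> real) \<Rightarrow> ('w \<Rightarrow> 'w \<Rightarrow> real) \<Rightarrow> real \<Rightarrow> nat \<Rightarrow>
   (nat \<Rightarrow> 'v) \<Rightarrow> (nat \<Rightarrow> nat \<Rightarrow> 'w) \<Rightarrow> (nat \<Rightarrow> 'v) \<Rightarrow> (nat \<Rightarrow> nat \<Rightarrow> 'w) \<Rightarrow>
   (nat \<Rightarrow> nat) \<Rightarrow> real" where
  "graph_cost dV dE p N a g b h \<pi> =
     (\<Sum>i\<in>{1..N}. dV (a i) (b (\<pi> i)) powr p)
     + 1 / (2 * (real N - 1)) *
       (\<Sum>(i, i')\<in>{1..N} \<times> {1..N}. dE (g i i') (h (\<pi> i) (\<pi> i')) powr p)"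

definition D_graph ::
  "('v \<Rightarrow> 'v \<Rightarrow> real) \<Rightarrow> ('w \<Rightarrow> 'w \<Rightarrow> real) \<Rightarrow> real \<Rightarrow> nat \<Rightarrow>
   (nat \<Rightarrow> 'v) \<Rightarrow> (nat \<Rightarrow> nat \<Rightarrow> 'w) \<Rightarrow> (nat \<Rightarrow> 'v) \<Rightarrow> (nat \<Rightarrow> nat \<Rightarrow> 'w) \<Rightarrow> real" where
  "D_graph dV dE p N a g b h =
     real N powr (- 1 / p) *
     (Min {graph_cost dV dE p N a g b h \<pi> | \<pi>. \<pi> permutes {1..N}}) powr (1 / p)"

definition is_graph :: "'y \<Rightarrow> nat \<Rightarrow> (nat \<Rightarrow> nat \<Rightarrow> 'y option) \<Rightarrow> bool" where
  "is_graph y0 n e \<longleftrightarrow> (\<forall>i\<in>{1..n}. \<forall>i'\<in>{1..n}. e i i' = e i' i) \<and> (\<forall>i\<in>{1..n}. e i i = Some y0)"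

end

theory Submission
  imports Defs
begin

text \<open>Keep an optimal matching \<pi> of the two small graphs and let it fix the padding vertices.
  Padded vertices and all edges touching them are then matched with identical labels, so the
  node and edge sums of the cost do not change; only the normalisations \<open>1/N\<close> and
  \<open>1/(2(N-1))\<close> get smaller when \<open>N\<close> grows from \<open>n\<^sub>1\<close> to \<open>n\<close>.\<close>

definition node_cost ::
  "('v \<Rightarrow> 'v \<Rightarrow> real) \<Rightarrow> real \<Rightarrow> nat \<Rightarrow> (nat \<Rightarrow> 'v) \<Rightarrow> (nat \<Rightarrow> 'v) \<Rightarrow> (nat \<Rightarrow> nat) \<Rightarrow> real" where
  "node_cost dV p N a b \<pi> = (\<Sum>i\<in>{1..N}. dV (a i) (b (\<pi> i)) powr p)"

definition edge_cost ::
  "('w \<Rightarrow> 'w \<Rightarrow> real) \<Rightarrow> real \<Rightarrow> nat \<Rightarrow> (nat \<Rightarrow> nat \<Rightarrow> 'w) \<Rightarrow> (nat \<Rightarrow> nat \<Rightarrow> 'w) \<Rightarrow>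
   (nat \<Rightarrow> nat) \<Rightarrow> real" where
  "edge_cost dE p N g h \<pi> =
     (\<Sum>(i, i')\<in>{1..N} \<times> {1..N}. dE (g i i') (h (\<pi> i) (\<pi> i')) powr p)"

lemma graph_cost_split:
  "graph_cost dV dE p N a g b h \<pi> =
     node_cost dV p N a b \<pi> + 1 / (2 * (real N - 1)) * edge_cost dE p N g h \<pi>"
  unfolding graph_cost_def node_cost_def edge_cost_def ..

lemma node_cost_nonneg: "node_cost dV p N a b \<pi> \<ge> 0"
  unfolding node_cost_def by (intro sum_nonneg) auto

lemma edge_cost_nonneg: "edge_cost dE p N g h \<pi> \<ge> 0"
  unfolding edge_cost_def by (intro sum_nonneg) auto

lemma graph_cost_nonneg:
  assumes "N \<ge> 1"
  shows "graph_cost dV dE p N a g b h \<pi> \<ge> 0"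
  unfolding graph_cost_split using assms node_cost_nonneg edge_cost_nonneg
  by (intro add_nonneg_nonneg mult_nonneg_nonneg) auto

lemma node_cost_padding:
  assumes "\<pi> permutes {1..n1}" "n1 \<le> n"
    and "\<forall>i\<in>{n1+1..n}. a i = x \<and> b i = x" and "dV x x = 0"
  shows "node_cost dV p n a b \<pi> = node_cost dV p n1 a b \<pi>"
  unfolding node_cost_def
proof (rule sum.mono_neutral_right)
  show "\<forall>i\<in>{1..n} - {1..n1}. dV (a i) (b (\<pi> i)) powr p = 0"
    using assms(3,4) permutes_not_in[OF assms(1)] by auto
qed (use assms(2) in auto)

lemma edge_cost_padding:
  assumes \<pi>: "\<pi> permutes {1..n1}" and "n1 \<le> n"
    and pad_diag: "\<forall>i\<in>{n1+1..n}. g i i = d \<and> h i i = d" and "dE d d = 0"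
    and pad_off: "\<forall>i\<in>{1..n}. \<forall>i'\<in>{1..n}. max i i' \<ge> n1 + 1 \<and> i \<noteq> i' \<longrightarrow>
           g i i' = c \<and> h i i' = c"
    and "dE c c = 0"
  shows "edge_cost dE p n g h \<pi> = edge_cost dE p n1 g h \<pi>"
  unfolding edge_cost_def
proof (rule sum.mono_neutral_right)
  have fix_out: "\<pi> i = i" if "i \<notin> {1..n1}" for i
    using permutes_not_in[OF \<pi>] that by metis
  have maps_in: "\<pi> i \<in> {1..n1}" if "i \<in> {1..n1}" for i
    using permutes_in_image[OF \<pi>] that by metis
  show "\<forall>x\<in>{1..n} \<times> {1..n} - {1..n1} \<times> {1..n1}.
          (\<lambda>(i, i'). dE (g i i') (h (\<pi> i) (\<pi> i')) powr p) x = 0"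
  proof
    fix x assume "x \<in> {1..n} \<times> {1..n} - {1..n1} \<times> {1..n1}"
    then obtain i i' where x_eq: "x = (i, i')" and i: "i \<in> {1..n}" "i' \<in> {1..n}"
      and out: "(i, i') \<notin> {1..n1} \<times> {1..n1}" by blast
    have "dE (g i i') (h (\<pi> i) (\<pi> i')) powr p = 0"
    proof (cases "i = i'")
      case True
      with i out have "i \<in> {n1+1..n}" by auto
      with True pad_diag fix_out \<open>dE d d = 0\<close> show ?thesis by simp
    next
      case False
      have "\<pi> i \<noteq> \<pi> i'" using False permutes_inj[OF \<pi>] by (metis injD)
      moreover have "\<pi> i \<in> {1..n}" "\<pi> i' \<in> {1..n}"
        using i fix_out maps_in \<open>n1 \<le> n\<close> by (metis atLeastAtMost_iff order_trans)+
      moreover have "max (\<pi> i) (\<pi> i') > n1"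
        using i out fix_out by (metis SigmaI atLeastAtMost_iff less_max_iff_disj not_le)
      moreover have "max i i' > n1" using i out by auto
      ultimately have "g i i' = c" "h (\<pi> i) (\<pi> i') = c"
        using pad_off i False by (simp_all add: Suc_le_eq)
      with \<open>dE c c = 0\<close> show ?thesis by simp
    qed
    then show "(\<lambda>(i, i'). dE (g i i') (h (\<pi> i) (\<pi> i')) powr p) x = 0" by (simp add: x_eq)
  qed
qed (use assms(2) in auto)

lemma edge_cost_single_vertex:
  assumes "\<pi> permutes {1..1}" "dE (g 1 1) (h 1 1) = 0"
  shows "edge_cost dE p 1 g h \<pi> = 0"
  using assms permutes_in_image[OF assms(1), of 1] unfolding edge_cost_def by simp

text \<open>For a single vertex the factor
  \<open>1/(2(N-1))\<close> is the junk value \<open>1/0 = 0\<close>, which is why the edge sum must vanish there.\<close>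
lemma normalised_cost_antimono:
  fixes A S :: real and n1 n :: nat
  assumes "A \<ge> 0" "S \<ge> 0" "1 \<le> n1" "n1 \<le> n" "n1 = 1 \<Longrightarrow> S = 0"
  shows "(A + 1 / (2 * (real n - 1)) * S) / real n \<le> (A + 1 / (2 * (real n1 - 1)) * S) / real n1"
proof (cases "n1 = 1")
  case True
  then show ?thesis using assms by (simp add: divide_le_eq mult_le_cancel_left1)
next
  case False
  then have n1: "real n1 \<ge> 2" and n: "real n \<ge> real n1" using assms by auto
  have "A / real n \<le> A / real n1"
    using n1 n assms(1) by (intro divide_left_mono) auto
  moreover have "S / (2 * (real n - 1) * real n) \<le> S / (2 * (real n1 - 1) * real n1)"
    using n1 n assms(2) by (intro divide_left_mono mult_mono) auto
  ultimately show ?thesis by (simp add: add_divide_distrib)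
qed

lemma graph_costs_finite_nonempty:
  "finite {graph_cost dV dE p N a g b h \<pi> | \<pi>. \<pi> permutes {1..N}}"
  "{graph_cost dV dE p N a g b h \<pi> | \<pi>. \<pi> permutes {1..N}} \<noteq> {}"
proof -
  show "finite {graph_cost dV dE p N a g b h \<pi> | \<pi>. \<pi> permutes {1..N}}"
    using finite_permutations[of "{1..N}"] by (simp add: setcompr_eq_image)
  show "{graph_cost dV dE p N a g b h \<pi> | \<pi>. \<pi> permutes {1..N}} \<noteq> {}"
    using permutes_id by blast
qed

lemma Min_graph_cost_nonneg:
  assumes "N \<ge> 1"
  shows "Min {graph_cost dV dE p N a g b h \<pi> | \<pi>. \<pi> permutes {1..N}} \<ge> 0"
proof -
  have "Min {graph_cost dV dE p N a g b h \<pi> | \<pi>. \<pi> permutes {1..N}}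
          \<in> {graph_cost dV dE p N a g b h \<pi> | \<pi>. \<pi> permutes {1..N}}"
    using graph_costs_finite_nonempty by (rule Min_in)
  then show ?thesis using graph_cost_nonneg[OF assms] by auto
qed

lemma D_graph_eq_Min:
  assumes "N \<ge> 1"
  shows "D_graph dV dE p N a g b h =
    (Min {graph_cost dV dE p N a g b h \<pi> | \<pi>. \<pi> permutes {1..N}} / real N) powr (1 / p)"
proof -
  have "real N powr (- 1 / p) = (1 / real N) powr (1 / p)"
    using assms by (simp add: powr_minus_divide powr_divide)
  then show ?thesis unfolding D_graph_def
    using assms Min_graph_cost_nonneg[OF assms] by (simp add: powr_divide)
qed

lemma D_graph_le_cost:
  assumes "N \<ge> 1" "p > 0" "\<pi> permutes {1..N}"
  shows "D_graph dV dE p N a g b h \<le> (graph_cost dV dE p N a g b h \<pi> / real N) powr (1 / p)"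
proof -
  have "Min {graph_cost dV dE p N a g b h \<pi> | \<pi>. \<pi> permutes {1..N}}
          \<le> graph_cost dV dE p N a g b h \<pi>"
    using assms(3) by (intro Min_le[OF graph_costs_finite_nonempty(1)]) auto
  moreover have "Min {graph_cost dV dE p N a g b h \<pi> | \<pi>. \<pi> permutes {1..N}} \<ge> 0"
    using assms(1) by (rule Min_graph_cost_nonneg)
  ultimately show ?thesis
    unfolding D_graph_eq_Min[OF assms(1)] using assms(1,2)
    by (intro powr_mono2 divide_right_mono) auto
qed

lemma D_graph_attained:
  assumes "N \<ge> 1"
  obtains \<pi> where "\<pi> permutes {1..N}"
    and "D_graph dV dE p N a g b h = (graph_cost dV dE p N a g b h \<pi> / real N) powr (1 / p)"
proof -
  have "Min {graph_cost dV dE p N a g b h \<pi> | \<pi>. \<pi> permutes {1..N}}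
          \<in> {graph_cost dV dE p N a g b h \<pi> | \<pi>. \<pi> permutes {1..N}}"
    using graph_costs_finite_nonempty by (rule Min_in)
  then show ?thesis using that unfolding D_graph_eq_Min[OF assms] by auto
qed

theorem lemmaA:
  fixes dX :: "'x \<Rightarrow> 'x \<Rightarrow> real" and dY :: "'y \<Rightarrow> 'y \<Rightarrow> real"
    and CX CY C1 p :: real and y0 :: 'y and n1 n :: nat
    and v u :: "nat \<Rightarrow> 'x option" and e g :: "nat \<Rightarrow> nat \<Rightarrow> 'y option"
  assumes "pseudometric dX" and "pseudometric dY"
    and "CX \<ge> 0" and "CY \<ge> 0" and "C1 \<ge> 0"
    and "\<forall>a b. dX a b \<le> CX" and "\<forall>a b. dY a b \<le> CY"
    and "p \<ge> 1"
    and "C1 powr p \<ge> CX powr p + CY powr p / 2"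
    and "1 \<le> n1" and "n1 \<le> n"
    and "is_graph y0 n1 e" and "is_graph y0 n1 g"
    and "\<forall>i\<in>{n1+1..n}. v i = None \<and> u i = None"
    and "\<forall>i\<in>{n1+1..n}. e i i = Some y0 \<and> g i i = Some y0"
    and "\<forall>i\<in>{1..n}. \<forall>i'\<in>{1..n}. max i i' \<ge> n1 + 1 \<and> i \<noteq> i' \<longrightarrow>
           e i i' = None \<and> g i i' = None"
  shows "D_graph (dX_ext dX p C1 CY) (dY_ext dY CY) p n v e u g
         \<le> D_graph (dX_ext dX p C1 CY) (dY_ext dY CY) p n1 v e u g"
proof -
  let ?dV = "dX_ext dX p C1 CY" and ?dE = "dY_ext dY CY"
  have dY_refl: "dY y0 y0 = 0" using assms(2) unfolding pseudometric_def by auto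
  obtain \<pi> where \<pi>: "\<pi> permutes {1..n1}"
    and opt: "D_graph ?dV ?dE p n1 v e u g = (graph_cost ?dV ?dE p n1 v e u g \<pi> / real n1) powr (1 / p)"
    using D_graph_attained[OF assms(10)] by blast
  have \<pi>_n: "\<pi> permutes {1..n}" using permutes_subset[OF \<pi>] assms(11) by auto
  have nodes: "node_cost ?dV p n v u \<pi> = node_cost ?dV p n1 v u \<pi>"
    using node_cost_padding[OF \<pi> assms(11,14)] by simp
  have edges: "edge_cost ?dE p n e g \<pi> = edge_cost ?dE p n1 e g \<pi>"
    using edge_cost_padding[OF \<pi> assms(11,15) _ assms(16)] dY_refl by simp
  have "n1 = 1 \<Longrightarrow> edge_cost ?dE p n1 e g \<pi> = 0"
    using \<pi> assms(12,13) dY_refl edge_cost_single_vertex[of \<pi> ?dE e g p]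
    by (auto simp: is_graph_def)
  then have normalised: "graph_cost ?dV ?dE p n v e u g \<pi> / real n \<le> graph_cost ?dV ?dE p n1 v e u g \<pi> / real n1"
    unfolding graph_cost_split nodes edges using assms(10,11)
    by (intro normalised_cost_antimono node_cost_nonneg edge_cost_nonneg)
  have "D_graph ?dV ?dE p n v e u g \<le> (graph_cost ?dV ?dE p n v e u g \<pi> / real n) powr (1 / p)"
    using assms(8,10,11) by (intro D_graph_le_cost[OF _ _ \<pi>_n]) auto
  also have "\<dots> \<le> (graph_cost ?dV ?dE p n1 v e u g \<pi> / real n1) powr (1 / p)"
    using normalised graph_cost_nonneg[of n] assms(8,10,11)
    by (intro powr_mono2 divide_nonneg_nonneg) auto
  also have "\<dots> = D_graph ?dV ?dE p n1 v e u g"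
    using opt by simp
  finally show ?thesis .
qed

end
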